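(* Let $\mu$ be the uniform probability measure on $\{-1,1\}^n$. There exists a universal constant $\kappa>0$ (independent of $n$) such that for every $V\subset\mathbb{R}^n$, $$\log\int \exp\Big(\sup_{\xi\in V}\{\langle\xi,x\rangle-\Lambda_\mu(\xi)\}\Big)\,d\mu(x)\le\kappa\, b(V).$$
   Context: $\Lambda_\mu(\xi)=\log\int e^{\langle\xi,x\rangle}d\mu(x)$ is the logarithmic Laplace transform (here $\Lambda_\mu(\xi)=\sum_i\log\cosh\xi_i$). $b(V)=\mathbb{E}\sup_{\xi\in V}\langle\xi,\varepsilon\rangle$ with $\varepsilon$ uniformly distributed on $\{-1,1\}^n$ (Rademacher mean-width). *)

theory Defs
  imports "HOL-Probability.Probability"
begin

text \<open>Vectors of R^n are represented as functions nat => real; only the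
coordinates i < n matter.\<close>

definition cube :: "nat \<Rightarrow> (nat \<Rightarrow> real) set" where
  "cube n = PiE {..<n} (\<lambda>_. {-1, 1})"

definition mu :: "nat \<Rightarrow> (nat \<Rightarrow> real) pmf" where
  "mu n = pmf_of_set (cube n)"

definition inner_n :: "nat \<Rightarrow> (nat \<Rightarrow> real) \<Rightarrow> (nat \<Rightarrow> real) \<Rightarrow> real" where
  "inner_n n \<xi> x = (\<Sum>i<n. \<xi> i * x i)"

definition log_laplace :: "nat \<Rightarrow> (nat \<Rightarrow> real) \<Rightarrow> real" where
  "log_laplace n \<xi> = ln (\<integral>x. exp (inner_n n \<xi> x) \<partial>(measure_pmf (mu n)))"

text \<open>Rademacher mean width b(V) = E sup_{xi in V} <xi, eps>, eps uniform on
{-1,1}^n; extended-real valued since the supremum may be infinite.\<close>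
definition rad_width :: "nat \<Rightarrow> (nat \<Rightarrow> real) set \<Rightarrow> ereal" where
  "rad_width n V = ereal (1 / 2 ^ n) * (\<Sum>\<epsilon>\<in>cube n. (SUP \<xi>\<in>V. ereal (inner_n n \<xi> \<epsilon>)))"

end

theory Submission
  imports Defs
begin

text \<open>The inequality holds with \<open>\<kappa> = 2\<close>, by induction on the dimension. For a weight \<open>c\<close> on \<open>V\<close>
  one proves
  \<open>E exp (sup\<^sub>\<xi> c \<xi> + \<langle>\<xi>,x\<rangle> - \<Lambda>(\<xi>)) \<le> exp (E sup\<^sub>\<xi> c \<xi> + 2\<langle>\<xi>,x\<rangle>)\<close>.
  Conditioning on the last coordinate \<open>x\<^sub>n = \<plusminus>1\<close> absorbs \<open>\<plusminus>\<xi>\<^sub>n - log cosh \<xi>\<^sub>n\<close> into the weight,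
  and the induction hypothesis leaves the mean of two exponentials; Jensen's inequality for the
  convex function \<open>(a, b) \<mapsto> log ((e\<^sup>a + e\<^sup>b) / 2)\<close> moves the expectation outside, and the step closes
  with the one-dimensional estimate \<open>log_mean_exp_SUP_le\<close>, an elementary two-point inequality for
  \<open>e\<^sup>t / cosh t\<close> and \<open>e\<^sup>-\<^sup>t / cosh t\<close>.\<close>

definition cube_avg :: "nat \<Rightarrow> ((nat \<Rightarrow> real) \<Rightarrow> real) \<Rightarrow> real" where
  "cube_avg n f = (\<Sum>x\<in>cube n. f x) / 2 ^ n"

definition log_mean_exp :: "real \<Rightarrow> real \<Rightarrow> real" where
  "log_mean_exp a b = ln ((exp a + exp b) / 2)"

lemma exp_log_mean_exp: "exp (log_mean_exp a b) = (exp a + exp b) / 2"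
  unfolding log_mean_exp_def by (simp add: add_pos_pos)

lemma finite_cube: "finite (cube n)"
  unfolding cube_def by (rule finite_PiE) auto

lemma card_cube: "card (cube n) = 2 ^ n"
  unfolding cube_def by (simp add: card_PiE numeral_2_eq_2)

lemma cube_not_empty: "cube n \<noteq> {}"
  using card_cube[of n] by auto

lemma cube_Suc: "cube (Suc n) = (\<lambda>(s, y). y(n := s)) ` ({-1, 1} \<times> cube n)"
  unfolding cube_def lessThan_Suc by (simp add: PiE_insert_eq)

lemma fun_upd_in_cube_Suc: "y \<in> cube n \<Longrightarrow> s \<in> {-1, 1} \<Longrightarrow> y(n := s) \<in> cube (Suc n)"
  unfolding cube_Suc by auto

lemma sum_cube_Suc:
  "(\<Sum>x\<in>cube (Suc n). f x) = (\<Sum>y\<in>cube n. f (y(n := 1)) + f (y(n := -1)))"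
proof -
  have inj: "inj_on (\<lambda>(s, y). y(n := s)) ({-1::real, 1} \<times> cube n)"
    unfolding cube_def using inj_combinator[of n "{..<n}" "\<lambda>_. {-1::real, 1}"] by simp
  have "(\<Sum>x\<in>cube (Suc n). f x) = (\<Sum>(s, y)\<in>{-1::real, 1} \<times> cube n. f (y(n := s)))"
    unfolding cube_Suc by (subst sum.reindex[OF inj]) (simp add: case_prod_unfold)
  also have "\<dots> = (\<Sum>s\<in>{-1::real, 1}. \<Sum>y\<in>cube n. f (y(n := s)))"
    by (subst sum.cartesian_product) (simp add: case_prod_unfold)
  finally show ?thesis
    by (simp add: sum.distrib add.commute)
qed

lemma cube_avg_Suc:
  "cube_avg (Suc n) f = (cube_avg n (\<lambda>y. f (y(n := 1))) + cube_avg n (\<lambda>y. f (y(n := -1)))) / 2"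
  unfolding cube_avg_def sum_cube_Suc by (simp add: sum.distrib add_divide_distrib)

lemma cube_avg_const [simp]: "cube_avg n (\<lambda>_. c) = c"
  unfolding cube_avg_def by (simp add: card_cube)

lemma cube_avg_mono: "(\<And>x. x \<in> cube n \<Longrightarrow> f x \<le> g x) \<Longrightarrow> cube_avg n f \<le> cube_avg n g"
  unfolding cube_avg_def by (intro divide_right_mono sum_mono) auto

lemma cube_avg_cong: "(\<And>x. x \<in> cube n \<Longrightarrow> f x = g x) \<Longrightarrow> cube_avg n f = cube_avg n g"
  unfolding cube_avg_def by simp

lemma cube_avg_add: "cube_avg n (\<lambda>x. f x + g x) = cube_avg n f + cube_avg n g"
  unfolding cube_avg_def by (simp add: sum.distrib add_divide_distrib)

lemma cube_avg_diff: "cube_avg n (\<lambda>x. f x - g x) = cube_avg n f - cube_avg n g"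
  unfolding cube_avg_def by (simp add: sum_subtractf diff_divide_distrib)

lemma cube_avg_mult_left: "cube_avg n (\<lambda>x. c * f x) = c * cube_avg n f"
  unfolding cube_avg_def by (simp add: sum_distrib_left)

lemma cube_avg_divide: "cube_avg n (\<lambda>x. f x / c) = cube_avg n f / c"
  unfolding cube_avg_def by (simp add: sum_divide_distrib mult.commute)

lemma cube_avg_pos: "(\<And>x. x \<in> cube n \<Longrightarrow> f x > 0) \<Longrightarrow> cube_avg n f > 0"
  unfolding cube_avg_def using finite_cube cube_not_empty by (intro divide_pos_pos sum_pos) auto

lemma integral_mu_eq_cube_avg: "(\<integral>x. f x \<partial>measure_pmf (mu n)) = cube_avg n f"
  unfolding mu_def cube_avg_def
  using integral_pmf_of_set[OF cube_not_empty finite_cube] by (simp add: card_cube)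

lemma exp_cube_avg_le: "exp (cube_avg n f) \<le> cube_avg n (\<lambda>x. exp (f x))"
proof -
  let ?m = "cube_avg n f"
  have "exp ?m = cube_avg n (\<lambda>x. exp ?m * (1 + (f x - ?m)))"
    by (simp add: cube_avg_mult_left cube_avg_add cube_avg_diff)
  also have "\<dots> \<le> cube_avg n (\<lambda>x. exp ?m * exp (f x - ?m))"
    by (intro cube_avg_mono mult_left_mono exp_ge_add_one_self) simp
  finally show ?thesis
    by (simp add: exp_diff)
qed

text \<open>Apply \<open>exp_cube_avg_le\<close> to \<open>a - h\<close> and \<open>b - h\<close>, where \<open>h = log_mean_exp a b\<close> pointwise;
  the two resulting averages add up to \<open>2\<close>.\<close>
lemma log_mean_exp_cube_avg_le:
  "log_mean_exp (cube_avg n a) (cube_avg n b) \<le> cube_avg n (\<lambda>y. log_mean_exp (a y) (b y))"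
proof -
  define h where "h y = log_mean_exp (a y) (b y)" for y
  have exp_h: "exp (h y) = (exp (a y) + exp (b y)) / 2" for y
    unfolding h_def by (rule exp_log_mean_exp)
  have shift: "exp (cube_avg n f) \<le> exp (cube_avg n h) * cube_avg n (\<lambda>y. exp (f y - h y))" for f
  proof -
    have "exp (cube_avg n f) = exp (cube_avg n h) * exp (cube_avg n (\<lambda>y. f y - h y))"
      by (simp add: cube_avg_diff flip: exp_add)
    also have "\<dots> \<le> exp (cube_avg n h) * cube_avg n (\<lambda>y. exp (f y - h y))"
      by (intro mult_left_mono exp_cube_avg_le) auto
    finally show ?thesis .
  qed
  have "exp (a y - h y) + exp (b y - h y) = 2" for y
  proof -
    have "exp (a y) + exp (b y) > 0"
      by (simp add: add_pos_pos)
    then show ?thesis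
      by (simp add: exp_diff exp_h add_divide_distrib [symmetric] field_simps)
  qed
  then have sum_two: "cube_avg n (\<lambda>y. exp (a y - h y)) + cube_avg n (\<lambda>y. exp (b y - h y)) = 2"
    by (simp add: cube_avg_add [symmetric])
  have "exp (cube_avg n a) + exp (cube_avg n b)
      \<le> exp (cube_avg n h) * (cube_avg n (\<lambda>y. exp (a y - h y)) + cube_avg n (\<lambda>y. exp (b y - h y)))"
    using add_mono[OF shift[of a] shift[of b]] by (simp add: distrib_left)
  then have "exp (cube_avg n a) + exp (cube_avg n b) \<le> exp (cube_avg n h) * 2"
    unfolding sum_two .
  then have "exp (log_mean_exp (cube_avg n a) (cube_avg n b)) \<le> exp (cube_avg n h)"
    by (simp add: exp_log_mean_exp)
  then show ?thesis
    unfolding h_def by simp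
qed

lemma inner_n_fun_upd_Suc: "inner_n (Suc n) \<xi> (y(n := s)) = inner_n n \<xi> y + \<xi> n * s"
  unfolding inner_n_def by (simp add: sum.lessThan_Suc)

lemma cube_avg_exp_inner_n: "cube_avg n (\<lambda>x. exp (inner_n n \<xi> x)) = (\<Prod>k<n. cosh (\<xi> k))"
proof (induction n)
  case 0
  then show ?case
    by (simp add: cube_avg_def cube_def inner_n_def)
next
  case (Suc n)
  let ?E = "cube_avg n (\<lambda>y. exp (inner_n n \<xi> y))"
  have "cube_avg (Suc n) (\<lambda>x. exp (inner_n (Suc n) \<xi> x))
      = (exp (\<xi> n) * ?E + exp (- \<xi> n) * ?E) / 2"
    unfolding cube_avg_Suc inner_n_fun_upd_Suc
    by (simp add: exp_add exp_diff exp_minus cube_avg_mult_left [symmetric] field_simps)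
  also have "\<dots> = ?E * cosh (\<xi> n)"
    unfolding cosh_def by (simp add: algebra_simps add_divide_distrib)
  finally show ?case
    using Suc by simp
qed

lemma log_laplace_eq_sum_ln_cosh: "log_laplace n \<xi> = (\<Sum>k<n. ln (cosh (\<xi> k)))"
  unfolding log_laplace_def integral_mu_eq_cube_avg cube_avg_exp_inner_n
  by (rule ln_prod) (auto simp: cosh_real_pos [THEN less_imp_neq [symmetric]])

lemma log_laplace_0 [simp]: "log_laplace 0 \<xi> = 0"
  by (simp add: log_laplace_eq_sum_ln_cosh)

lemma log_laplace_Suc: "log_laplace (Suc n) \<xi> = log_laplace n \<xi> + ln (cosh (\<xi> n))"
  by (simp add: log_laplace_eq_sum_ln_cosh)

lemma square_add_le_cross_ratio:
  fixes P Q R B :: real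
  assumes "0 < R" "R \<le> Q" "0 < B" "B \<le> P"
  shows "(P + Q)\<^sup>2 \<le> (P + R) * (P / R) * (Q + B) * (Q / B)"
proof -
  have "(P + Q) / Q \<le> (P + R) / R" and "(P + Q) / P \<le> (Q + B) / B"
    using assms by (simp_all add: add_divide_distrib divide_left_mono)
  then have ratio_bound: "(P + Q) / Q * ((P + Q) / P) \<le> (P + R) / R * ((Q + B) / B)"
    using assms by (intro mult_mono) auto
  have "(P + Q)\<^sup>2 = (P + Q) / Q * ((P + Q) / P) * (P * Q)"
    using assms by (simp add: power2_eq_square)
  also have "\<dots> \<le> (P + R) / R * ((Q + B) / B) * (P * Q)"
    using ratio_bound assms by (intro mult_right_mono) auto
  also have "\<dots> = (P + R) * (P / R) * (Q + B) * (Q / B)"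
    by simp
  finally show ?thesis .
qed

text \<open>Split \<open>D\<^sub>1 = P + R\<close> and \<open>D\<^sub>2 = Q + B\<close> in the ratios \<open>P : R = X\<close> and \<open>B : Q = Y\<close>; the left-hand
  side is \<open>(P + Q)\<^sup>2\<close>, bounded by \<open>D\<^sub>1\<^sup>2\<close> if \<open>Q \<le> R\<close>, by \<open>D\<^sub>2\<^sup>2\<close> if \<open>P \<le> B\<close>, and by
  \<open>D\<^sub>1 X \<cdot> D\<^sub>2 / Y\<close> otherwise.\<close>
lemma two_point_ineq:
  fixes D1 D2 X Y :: real
  assumes "D1 > 0" "D2 > 0" "X > 0" "Y > 0"
  shows "(D1 * X / (1 + X) + D2 / (1 + Y))\<^sup>2 \<le> max (D1 * X) (D2 * Y) * max (D1 / X) (D2 / Y)"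
proof -
  define P R Q B where "P = D1 * X / (1 + X)" and "R = D1 / (1 + X)"
    and "Q = D2 / (1 + Y)" and "B = D2 * Y / (1 + Y)"
  have pos: "P > 0" "Q > 0" "R > 0" "B > 0"
    unfolding P_def Q_def R_def B_def using assms by auto
  have "P + R = D1 * (1 + X) / (1 + X)" "Q + B = D2 * (1 + Y) / (1 + Y)"
    unfolding P_def R_def Q_def B_def by (simp_all add: add_divide_distrib [symmetric] algebra_simps)
  then have D1: "P + R = D1" and D2: "Q + B = D2"
    using assms by simp_all
  have ratios: "P / R = X" "Q / B = 1 / Y"
    unfolding P_def R_def Q_def B_def using assms by (simp_all add: divide_simps)
  let ?M = "max (D1 * X) (D2 * Y) * max (D1 / X) (D2 / Y)"
  have products: "D1 * X * (D1 / X) \<le> ?M" "D2 * Y * (D2 / Y) \<le> ?M" "D1 * X * (D2 / Y) \<le> ?M"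
    using assms by - (rule mult_mono; auto simp: le_max_iff_disj)+
  consider "Q \<le> R" | "P \<le> B" | "R \<le> Q" "B \<le> P"
    by linarith
  then have "(P + Q)\<^sup>2 \<le> ?M"
  proof cases
    case 1
    then have "(P + Q)\<^sup>2 \<le> D1 * X * (D1 / X)"
      using pos assms D1 by (simp add: power_mono power2_eq_square [symmetric])
    with products show ?thesis by linarith
  next
    case 2
    then have "(P + Q)\<^sup>2 \<le> D2 * Y * (D2 / Y)"
      using pos assms D2 by (simp add: power_mono power2_eq_square [symmetric])
    with products show ?thesis by linarith
  next
    case 3
    then have "(P + Q)\<^sup>2 \<le> D1 * X * (D2 / Y)"
      using square_add_le_cross_ratio[of R Q B P] pos D1 D2 ratios by simp
    with products show ?thesis by linarith
  qed
  then show ?thesis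
    unfolding P_def Q_def .
qed

lemma exp_add_sub_ln_cosh: "exp ((d::real) + t - ln (cosh t)) = 2 * (exp d * exp (2 * t) / (1 + exp (2 * t)))"
proof -
  have "exp (d + t - ln (cosh t)) = exp d * exp t / cosh t"
    using cosh_real_pos[of t] by (simp add: exp_diff exp_add)
  then show ?thesis
    unfolding cosh_def by (simp add: field_simps exp_minus mult_exp_exp flip: exp_add)
qed

lemma exp_diff_sub_ln_cosh: "exp ((d::real) - t - ln (cosh t)) = 2 * (exp d / (1 + exp (2 * t)))"
proof -
  have "exp (d - t - ln (cosh t)) = exp d * exp (- t) / cosh t"
    using cosh_real_pos[of t] by (simp add: exp_diff exp_add exp_minus field_simps)
  then show ?thesis
    unfolding cosh_def by (simp add: field_simps exp_minus mult_exp_exp flip: exp_add)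
qed

lemma exp_sub_ln_cosh_bound:
  fixes d1 t1 d2 t2 :: real
  shows "(exp (d1 + t1 - ln (cosh t1)) + exp (d2 - t2 - ln (cosh t2)))\<^sup>2
     \<le> 4 * (max (exp (d1 + 2 * t1)) (exp (d2 + 2 * t2)) * max (exp (d1 - 2 * t1)) (exp (d2 - 2 * t2)))"
proof -
  have "(exp (d1 + t1 - ln (cosh t1)) + exp (d2 - t2 - ln (cosh t2)))\<^sup>2
     = 4 * (exp d1 * exp (2 * t1) / (1 + exp (2 * t1)) + exp d2 / (1 + exp (2 * t2)))\<^sup>2"
    unfolding exp_add_sub_ln_cosh exp_diff_sub_ln_cosh by (simp add: power2_eq_square algebra_simps)
  also have "\<dots> \<le> 4 * (max (exp d1 * exp (2 * t1)) (exp d2 * exp (2 * t2))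
                     * max (exp d1 / exp (2 * t1)) (exp d2 / exp (2 * t2)))"
    by (intro mult_left_mono two_point_ineq) auto
  finally show ?thesis
    by (simp add: exp_add exp_diff)
qed

lemma exp_SUP_add_exp_SUP_le:
  fixes f g :: "'a \<Rightarrow> real"
  assumes ne: "I \<noteq> {}" and bound: "\<And>i j. i \<in> I \<Longrightarrow> j \<in> I \<Longrightarrow> exp (f i) + exp (g j) \<le> K"
  shows "exp (SUP i\<in>I. f i) + exp (SUP j\<in>I. g j) \<le> K"
proof -
  have SUP_le: "exp (SUP i\<in>I. h i) \<le> K - a" if "\<And>i. i \<in> I \<Longrightarrow> exp (h i) \<le> K - a"
    for h :: "'a \<Rightarrow> real" and a
  proof -
    obtain i0 where "i0 \<in> I"
      using ne by auto
    then have pos: "K - a > 0"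
      using that by (smt (verit) exp_gt_zero)
    have "(SUP i\<in>I. h i) \<le> ln (K - a)"
      using that pos by (intro cSUP_least[OF ne]) (simp add: ln_ge_iff)
    then show ?thesis
      using pos by (metis exp_le_cancel_iff exp_ln)
  qed
  have "exp (SUP i\<in>I. f i) \<le> K - exp (g j)" if "j \<in> I" for j
    using that bound by (intro SUP_le) (simp add: algebra_simps)
  then have "exp (SUP j\<in>I. g j) \<le> K - exp (SUP i\<in>I. f i)"
    by (intro SUP_le) (simp add: algebra_simps)
  then show ?thesis
    by simp
qed

lemma log_mean_exp_SUP_le:
  fixes d t :: "'a \<Rightarrow> real"
  assumes ne: "I \<noteq> {}" and bdd_plus: "bdd_above ((\<lambda>i. d i + 2 * t i) ` I)"
    and bdd_minus: "bdd_above ((\<lambda>i. d i - 2 * t i) ` I)"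
  shows "log_mean_exp (SUP i\<in>I. d i + t i - ln (cosh (t i))) (SUP i\<in>I. d i - t i - ln (cosh (t i)))
     \<le> ((SUP i\<in>I. d i + 2 * t i) + (SUP i\<in>I. d i - 2 * t i)) / 2"
proof -
  define Rp Rm where "Rp = (SUP i\<in>I. d i + 2 * t i)" and "Rm = (SUP i\<in>I. d i - 2 * t i)"
  define M where "M = exp ((Rp + Rm) / 2)"
  have "exp (d i + t i - ln (cosh (t i))) + exp (d j - t j - ln (cosh (t j))) \<le> 2 * M"
    if "i \<in> I" "j \<in> I" for i j
  proof -
    have "max (exp (d i + 2 * t i)) (exp (d j + 2 * t j)) \<le> exp Rp"
      "max (exp (d i - 2 * t i)) (exp (d j - 2 * t j)) \<le> exp Rm"
      unfolding Rp_def Rm_def using that bdd_plus bdd_minus by (auto intro: cSUP_upper)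
    then have "(exp (d i + t i - ln (cosh (t i))) + exp (d j - t j - ln (cosh (t j))))\<^sup>2
        \<le> 4 * (exp Rp * exp Rm)"
      using exp_sub_ln_cosh_bound[of "d i" "t i" "d j" "t j"]
      by (smt (verit) exp_gt_zero max.cobounded1 mult_left_mono mult_mono)
    also have "\<dots> = (2 * M)\<^sup>2"
      unfolding M_def by (simp add: power2_eq_square flip: exp_add)
    finally show ?thesis
      by (rule power2_le_imp_le) (simp add: M_def)
  qed
  then have "exp (SUP i\<in>I. d i + t i - ln (cosh (t i))) + exp (SUP i\<in>I. d i - t i - ln (cosh (t i)))
      \<le> 2 * M"
    by (rule exp_SUP_add_exp_SUP_le[OF ne])
  then have "exp (log_mean_exp (SUP i\<in>I. d i + t i - ln (cosh (t i))) (SUP i\<in>I. d i - t i - ln (cosh (t i))))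
      \<le> exp ((Rp + Rm) / 2)"
    unfolding exp_log_mean_exp M_def by simp
  then show ?thesis
    unfolding Rp_def Rm_def by simp
qed

lemma bdd_above_image_le_combination:
  fixes f g h :: "'a \<Rightarrow> real"
  assumes "bdd_above (f ` V)" "bdd_above (g ` V)" "\<And>\<xi>. \<xi> \<in> V \<Longrightarrow> h \<xi> \<le> a * f \<xi> + b * g \<xi>"
    and "a \<ge> 0" "b \<ge> 0"
  shows "bdd_above (h ` V)"
proof -
  obtain M1 M2 where "\<And>\<xi>. \<xi> \<in> V \<Longrightarrow> f \<xi> \<le> M1" "\<And>\<xi>. \<xi> \<in> V \<Longrightarrow> g \<xi> \<le> M2"
    using assms(1,2) by (auto simp: bdd_above_def)
  then have "\<And>\<xi>. \<xi> \<in> V \<Longrightarrow> h \<xi> \<le> a * M1 + b * M2"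
    using assms(3-) by (smt (verit) mult_left_mono)
  then show ?thesis
    by (rule bdd_aboveI2)
qed

lemma bdd_above_add_mult_sub_ln_cosh:
  fixes d t :: "'a \<Rightarrow> real"
  assumes "bdd_above ((\<lambda>i. d i + 2 * t i) ` I)" and "bdd_above ((\<lambda>i. d i - 2 * t i) ` I)"
    and "\<bar>s\<bar> \<le> 1"
  shows "bdd_above ((\<lambda>i. d i + s * t i - ln (cosh (t i))) ` I)"
proof (rule bdd_above_image_le_combination[OF assms(1,2), where a = "(2 + s) / 4" and b = "(2 - s) / 4"])
  fix i
  have "0 \<le> ln (cosh (t i))"
    using cosh_real_ge_1[of "t i"] by simp
  then show "d i + s * t i - ln (cosh (t i)) \<le> (2 + s) / 4 * (d i + 2 * t i) + (2 - s) / 4 * (d i - 2 * t i)"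
    by (simp add: field_simps)
qed (use assms(3) in auto)

lemma cube_avg_exp_SUP_le:
  assumes ne: "V \<noteq> {}"
    and "\<forall>x\<in>cube n. bdd_above ((\<lambda>\<xi>. c \<xi> + 2 * inner_n n \<xi> x) ` V)"
  shows "cube_avg n (\<lambda>x. exp (SUP \<xi>\<in>V. c \<xi> + inner_n n \<xi> x - log_laplace n \<xi>))
      \<le> exp (cube_avg n (\<lambda>x. SUP \<xi>\<in>V. c \<xi> + 2 * inner_n n \<xi> x))"
  using assms(2)
proof (induction n arbitrary: c)
  case 0
  show ?case
    by (simp add: cube_avg_def cube_def inner_n_def)
next
  case (Suc n)
  define d where "d y \<xi> = c \<xi> + 2 * inner_n n \<xi> y" for y \<xi>
  define w where "w s \<xi> = c \<xi> + s * \<xi> n - ln (cosh (\<xi> n))" for s and \<xi> :: "nat \<Rightarrow> real"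
  define T where "T s y = (SUP \<xi>\<in>V. w s \<xi> + 2 * inner_n n \<xi> y)" for s y
  have bdd_plus: "bdd_above ((\<lambda>\<xi>. d y \<xi> + 2 * \<xi> n) ` V)"
    and bdd_minus: "bdd_above ((\<lambda>\<xi>. d y \<xi> - 2 * \<xi> n) ` V)" if "y \<in> cube n" for y
  proof -
    have "bdd_above ((\<lambda>\<xi>. c \<xi> + 2 * inner_n (Suc n) \<xi> (y(n := s))) ` V)" if "s \<in> {-1, 1}" for s
      using Suc.prems fun_upd_in_cube_Suc[OF \<open>y \<in> cube n\<close> that] by simp
    from this[of 1] this[of "-1"] show "bdd_above ((\<lambda>\<xi>. d y \<xi> + 2 * \<xi> n) ` V)"
      and "bdd_above ((\<lambda>\<xi>. d y \<xi> - 2 * \<xi> n) ` V)"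
      unfolding inner_n_fun_upd_Suc d_def by (simp_all add: algebra_simps)
  qed
  have T_eq: "T s y = (SUP \<xi>\<in>V. d y \<xi> + s * \<xi> n - ln (cosh (\<xi> n)))" for s y
    unfolding T_def w_def d_def by (simp add: algebra_simps)
  have IH: "cube_avg n (\<lambda>y. exp (SUP \<xi>\<in>V. w s \<xi> + inner_n n \<xi> y - log_laplace n \<xi>))
      \<le> exp (cube_avg n (T s))" if "\<bar>s\<bar> \<le> 1" for s
  proof -
    have "bdd_above ((\<lambda>\<xi>. w s \<xi> + 2 * inner_n n \<xi> y) ` V)" if "y \<in> cube n" for y
      using bdd_above_add_mult_sub_ln_cosh[OF bdd_plus[OF that] bdd_minus[OF that] \<open>\<bar>s\<bar> \<le> 1\<close>]
      by (simp add: w_def d_def algebra_simps)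
    then show ?thesis
      unfolding T_def by (simp add: Suc.IH)
  qed
  have "cube_avg (Suc n) (\<lambda>x. exp (SUP \<xi>\<in>V. c \<xi> + inner_n (Suc n) \<xi> x - log_laplace (Suc n) \<xi>))
      = (cube_avg n (\<lambda>y. exp (SUP \<xi>\<in>V. w 1 \<xi> + inner_n n \<xi> y - log_laplace n \<xi>))
        + cube_avg n (\<lambda>y. exp (SUP \<xi>\<in>V. w (-1) \<xi> + inner_n n \<xi> y - log_laplace n \<xi>))) / 2"
    unfolding cube_avg_Suc inner_n_fun_upd_Suc log_laplace_Suc w_def
    by (simp add: algebra_simps)
  also have "\<dots> \<le> exp (log_mean_exp (cube_avg n (T 1)) (cube_avg n (T (-1))))"
    using IH[of 1] IH[of "-1"] by (simp add: exp_log_mean_exp)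
  also have "\<dots> \<le> exp (cube_avg n (\<lambda>y. log_mean_exp (T 1 y) (T (-1) y)))"
    by (simp add: log_mean_exp_cube_avg_le)
  also have "\<dots> \<le> exp (cube_avg n (\<lambda>y. ((SUP \<xi>\<in>V. d y \<xi> + 2 * \<xi> n) + (SUP \<xi>\<in>V. d y \<xi> - 2 * \<xi> n)) / 2))"
    using log_mean_exp_SUP_le[OF ne bdd_plus bdd_minus]
    by (simp add: T_eq cube_avg_mono)
  also have "\<dots> = exp (cube_avg (Suc n) (\<lambda>x. SUP \<xi>\<in>V. c \<xi> + 2 * inner_n (Suc n) \<xi> x))"
    unfolding cube_avg_Suc inner_n_fun_upd_Suc d_def
    by (simp add: algebra_simps cube_avg_add cube_avg_divide add_divide_distrib)
  finally show ?case .
qed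

lemma cSUP_mult_left:
  fixes f :: "'a \<Rightarrow> real"
  assumes ne: "V \<noteq> {}" and bdd: "bdd_above (f ` V)" and "k > 0"
  shows "(SUP \<xi>\<in>V. k * f \<xi>) = k * (SUP \<xi>\<in>V. f \<xi>)"
proof (rule antisym)
  show "(SUP \<xi>\<in>V. k * f \<xi>) \<le> k * (SUP \<xi>\<in>V. f \<xi>)"
    using \<open>k > 0\<close> by (intro cSUP_least[OF ne]) (auto intro: cSUP_upper[OF _ bdd])
  have bdd_k: "bdd_above ((\<lambda>\<xi>. k * f \<xi>) ` V)"
    using \<open>k > 0\<close> by (intro bdd_above_image_le_combination[OF bdd bdd, where a = k and b = 0]) auto
  have "(SUP \<xi>\<in>V. f \<xi>) \<le> (SUP \<xi>\<in>V. k * f \<xi>) / k"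
    using \<open>k > 0\<close> cSUP_upper[OF _ bdd_k]
    by (intro cSUP_least[OF ne]) (simp add: pos_le_divide_eq mult.commute)
  then show "k * (SUP \<xi>\<in>V. f \<xi>) \<le> (SUP \<xi>\<in>V. k * f \<xi>)"
    using \<open>k > 0\<close> by (simp add: field_simps)
qed

lemma ereal_SUP_bdd_above:
  fixes f :: "'a \<Rightarrow> real"
  assumes "V \<noteq> {}" and "bdd_above (f ` V)"
  shows "(SUP \<xi>\<in>V. ereal (f \<xi>)) = ereal (SUP \<xi>\<in>V. f \<xi>)"
proof -
  obtain M where "\<And>\<xi>. \<xi> \<in> V \<Longrightarrow> f \<xi> \<le> M"
    using assms(2) by (auto simp: bdd_above_def)
  then have "(SUP \<xi>\<in>V. ereal (f \<xi>)) \<le> ereal M"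
    by (auto intro: SUP_least)
  moreover obtain \<xi>0 where "\<xi>0 \<in> V"
    using assms(1) by auto
  then have "ereal (f \<xi>0) \<le> (SUP \<xi>\<in>V. ereal (f \<xi>))"
    by (rule SUP_upper)
  ultimately have "\<bar>SUP \<xi>\<in>V. ereal (f \<xi>)\<bar> \<noteq> \<infinity>"
    by auto
  then show ?thesis
    by (simp add: ereal_SUP)
qed

lemma rad_width_eq_cube_avg:
  assumes "V \<noteq> {}" and "\<forall>x\<in>cube n. bdd_above ((\<lambda>\<xi>. inner_n n \<xi> x) ` V)"
  shows "rad_width n V = ereal (cube_avg n (\<lambda>x. SUP \<xi>\<in>V. inner_n n \<xi> x))"
proof -
  have "rad_width n V = ereal (1 / 2 ^ n) * (\<Sum>x\<in>cube n. ereal (SUP \<xi>\<in>V. inner_n n \<xi> x))"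
    unfolding rad_width_def using assms by (simp add: ereal_SUP_bdd_above)
  then show ?thesis
    by (simp add: cube_avg_def)
qed

lemma rad_width_eq_infinity:
  assumes "x \<in> cube n" and "\<not> bdd_above ((\<lambda>\<xi>. inner_n n \<xi> x) ` V)"
  shows "rad_width n V = \<infinity>"
proof -
  have "(SUP \<xi>\<in>V. ereal (inner_n n \<xi> x)) = \<infinity>"
  proof (rule SUP_PInfty)
    fix m :: nat
    from assms(2) obtain \<xi> where "\<xi> \<in> V" "real m < inner_n n \<xi> x"
      unfolding bdd_above_def by (auto simp: not_le)
    then show "\<exists>\<xi>\<in>V. ereal (real m) \<le> ereal (inner_n n \<xi> x)"
      by force
  qed
  then have "(\<Sum>\<epsilon>\<in>cube n. SUP \<xi>\<in>V. ereal (inner_n n \<xi> \<epsilon>)) = \<infinity>"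
    using finite_cube assms(1) by (auto simp: sum_Pinfty)
  then show ?thesis
    unfolding rad_width_def by simp
qed

lemma ln_integral_exp_SUP_le:
  assumes ne: "V \<noteq> {}" and bdd: "\<forall>x\<in>cube n. bdd_above ((\<lambda>\<xi>. inner_n n \<xi> x) ` V)"
  shows "ln (\<integral>x. exp (SUP \<xi>\<in>V. inner_n n \<xi> x - log_laplace n \<xi>) \<partial>measure_pmf (mu n))
      \<le> 2 * cube_avg n (\<lambda>x. SUP \<xi>\<in>V. inner_n n \<xi> x)"
proof -
  let ?E = "cube_avg n (\<lambda>x. exp (SUP \<xi>\<in>V. inner_n n \<xi> x - log_laplace n \<xi>))"
  have "bdd_above ((\<lambda>\<xi>. 0 + 2 * inner_n n \<xi> x) ` V)" if "x \<in> cube n" for x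
    by (rule bdd_above_image_le_combination[OF bdd[rule_format, OF that] bdd[rule_format, OF that],
          where a = 2 and b = 0]) auto
  then have "?E \<le> exp (cube_avg n (\<lambda>x. SUP \<xi>\<in>V. 2 * inner_n n \<xi> x))"
    using cube_avg_exp_SUP_le[OF ne, of n "\<lambda>_. 0"] by simp
  also have "cube_avg n (\<lambda>x. SUP \<xi>\<in>V. 2 * inner_n n \<xi> x) = 2 * cube_avg n (\<lambda>x. SUP \<xi>\<in>V. inner_n n \<xi> x)"
    using bdd by (simp add: cube_avg_mult_left [symmetric] cSUP_mult_left[OF ne] cong: cube_avg_cong)
  finally have "ln ?E \<le> ln (exp (2 * cube_avg n (\<lambda>x. SUP \<xi>\<in>V. inner_n n \<xi> x)))"
    by (subst ln_le_cancel_iff) (auto intro: cube_avg_pos)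
  then show ?thesis
    by (simp add: integral_mu_eq_cube_avg)
qed

theorem proposition2p4:
  shows "\<exists>\<kappa>::real. \<kappa> > 0 \<and>
    (\<forall>(n::nat) (V::(nat \<Rightarrow> real) set).
       V \<noteq> {} \<longrightarrow> V \<subseteq> {\<xi>. \<forall>i\<ge>n. \<xi> i = 0} \<longrightarrow>
       ereal (ln (\<integral>x. exp (SUP \<xi>\<in>V. inner_n n \<xi> x - log_laplace n \<xi>) \<partial>(measure_pmf (mu n))))
         \<le> ereal \<kappa> * rad_width n V)"
proof (intro exI[of _ 2] conjI allI impI)
  fix n :: nat and V :: "(nat \<Rightarrow> real) set"
  assume ne: "V \<noteq> {}"
  show "ereal (ln (\<integral>x. exp (SUP \<xi>\<in>V. inner_n n \<xi> x - log_laplace n \<xi>) \<partial>(measure_pmf (mu n))))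
      \<le> ereal 2 * rad_width n V"
  proof (cases "\<forall>x\<in>cube n. bdd_above ((\<lambda>\<xi>. inner_n n \<xi> x) ` V)")
    case True
    then show ?thesis
      using ln_integral_exp_SUP_le[OF ne True] by (simp add: rad_width_eq_cube_avg[OF ne True])
  next
    case False
    then show ?thesis
      using rad_width_eq_infinity by auto
  qed
qed simp

end
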